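(* Let $(p_0,\dots,p_{n-1})$ be a closed discrete curve and let $\kappa\in\mathbb{R}\setminus\{0\}$. The following are equivalent: (1) the curve is an equilibrium of $L+\kappa\mathrm{Vol}$, i.e. $\nabla_{p_k}L+\kappa\nabla_{p_k}\mathrm{Vol}=0$ for all $k$; (2) there exist $l_0>0$ and $\theta_0\in(-\pi,\pi)$ such that $l_k=l_0$ and $\theta_k=\theta_0$ for all $k$, and $\kappa l_0=2\tan(\theta_0/2)$.
   Context: A closed discrete curve is an $n$-tuple $(p_0,\dots,p_{n-1})$ of points of $\mathbb{R}^2$ ($n\ge3$), indices modulo $n$, with $l_k:=|p_{k+1}-p_k|\ne0$ for all $k$. $R_\varphi$ denotes rotation of $\mathbb{R}^2$ by $\varphi$. Fix $R\in\{R_{\pi/2},R_{-\pi/2}\}$ and set $\sigma=+1$ if $R=R_{\pi/2}$, $\sigma=-1$ if $R=R_{-\pi/2}$. Edge normal $\nu_k:=R((p_{k+1}-p_k)/l_k)$. The signed angle $\theta_k\in(-\pi,\pi]$ at vertex $p_k$ is defined by $\nu_k=R_{\sigma\theta_k}\nu_{k-1}$. Length $L=\sum_k l_k$, area $\mathrm{Vol}=\frac12\sum_k\langle p_k,\nu_k\rangle l_k$, both functions on $(\mathbb{R}^2)^n$; $\nabla_{p_k}$ is the gradient with respect to $p_k$. *)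

theory Defs
  imports "HOL-Analysis.Analysis"
begin

text \<open>The plane R^2 is modelled by the complex numbers (with the real inner product
  of HOL-Analysis). A closed discrete curve with n points is a map p :: nat => complex
  of which only p 0, ..., p (n-1) matter; indices are taken modulo n.
  The parameter sigma in {1,-1} encodes the choice R = R_(sigma pi/2).\<close>

definition rot :: "real \<Rightarrow> complex \<Rightarrow> complex" where
  "rot \<phi> z = cis \<phi> * z"

definition edge_len :: "nat \<Rightarrow> (nat \<Rightarrow> complex) \<Rightarrow> nat \<Rightarrow> real" where
  "edge_len n p k = cmod (p (Suc k mod n) - p (k mod n))"

definition closed_discrete_curve :: "nat \<Rightarrow> (nat \<Rightarrow> complex) \<Rightarrow> bool" where
  "closed_discrete_curve n p \<longleftrightarrow> n \<ge> 3 \<and> (\<forall>k<n. edge_len n p k \<noteq> 0)"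

definition edge_normal :: "real \<Rightarrow> nat \<Rightarrow> (nat \<Rightarrow> complex) \<Rightarrow> nat \<Rightarrow> complex" where
  "edge_normal \<sigma> n p k =
     rot (\<sigma> * pi / 2) ((p (Suc k mod n) - p (k mod n)) / complex_of_real (edge_len n p k))"

definition turn_angle :: "real \<Rightarrow> nat \<Rightarrow> (nat \<Rightarrow> complex) \<Rightarrow> nat \<Rightarrow> real" where
  "turn_angle \<sigma> n p k = (THE \<theta>. -pi < \<theta> \<and> \<theta> \<le> pi \<and>
      edge_normal \<sigma> n p k = rot (\<sigma> * \<theta>) (edge_normal \<sigma> n p (k + n - 1)))"

definition curve_length :: "nat \<Rightarrow> (nat \<Rightarrow> complex) \<Rightarrow> real" where
  "curve_length n p = (\<Sum>k<n. edge_len n p k)"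

definition curve_area :: "real \<Rightarrow> nat \<Rightarrow> (nat \<Rightarrow> complex) \<Rightarrow> real" where
  "curve_area \<sigma> n p = (1/2) * (\<Sum>k<n. inner (p k) (edge_normal \<sigma> n p k) * edge_len n p k)"

definition has_gradient_at :: "(complex \<Rightarrow> real) \<Rightarrow> complex \<Rightarrow> complex \<Rightarrow> bool" where
  "has_gradient_at f g x \<longleftrightarrow> (f has_derivative (\<lambda>h. inner g h)) (at x)"

end

theory Submission
  imports Defs
begin

text \<open>At a vertex \<open>p_k\<close> only the edges \<open>k-1\<close> and \<open>k\<close> depend on \<open>p_k\<close>, so
  \<open>\<nabla>L = T_(k-1) - T_k\<close> for the unit tangents \<open>T_j\<close>, and
  \<open>\<nabla>Vol = R (p_(k+1) - p_(k-1)) / 2 = R (l_k T_k + l_(k-1) T_(k-1)) / 2\<close>.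
  Writing \<open>T_k = e^(i\<sigma>\<theta>_k) T_(k-1)\<close> and dividing the equilibrium equation by
  \<open>e^(i\<sigma>\<theta>_k/2) T_(k-1)\<close> makes it symmetric: its real and imaginary parts are
  \<open>(l_k - l_(k-1)) sin (\<theta>_k/2) = 0\<close> and \<open>4 sin (\<theta>_k/2) = \<kappa> (l_k + l_(k-1)) cos (\<theta>_k/2)\<close>.
  Since \<open>\<kappa> \<noteq> 0\<close> forces \<open>sin (\<theta>_k/2) \<noteq> 0\<close>, they say exactly \<open>l_k = l_(k-1)\<close> and
  \<open>\<kappa> l_k = 2 tan (\<theta>_k/2)\<close>. Going around the curve, all edges have the same length \<open>l_0\<close>,
  and then every \<open>\<theta>_k\<close> equals \<open>2 arctan (\<kappa> l_0/2)\<close>.\<close>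

definition cyc_pred :: "nat \<Rightarrow> nat \<Rightarrow> nat" where
  "cyc_pred n k = (k + n - 1) mod n"

definition edge_vec :: "nat \<Rightarrow> (nat \<Rightarrow> complex) \<Rightarrow> nat \<Rightarrow> complex" where
  "edge_vec n p k = p (Suc k mod n) - p (k mod n)"

lemma cyc_pred_less: "0 < n \<Longrightarrow> cyc_pred n k < n"
  by (simp add: cyc_pred_def)

lemma Suc_cyc_pred_mod: "k < n \<Longrightarrow> Suc (cyc_pred n k) mod n = k"
  by (cases k) (simp_all add: cyc_pred_def mod_Suc_eq)

lemma cyc_pred_neq: "2 \<le> n \<Longrightarrow> k < n \<Longrightarrow> cyc_pred n k \<noteq> k"
  by (cases k) (auto simp: cyc_pred_def)

lemma Suc_mod_neq_self: "2 \<le> n \<Longrightarrow> k < n \<Longrightarrow> Suc k mod n \<noteq> k"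
  by (auto simp: mod_Suc)

lemma cyc_pred_unique: "j < n \<Longrightarrow> Suc j mod n = k \<Longrightarrow> cyc_pred n k = j"
  by (cases "Suc j = n") (auto simp: cyc_pred_def mod_Suc_eq)

lemma cyc_pred_Suc: "Suc k < n \<Longrightarrow> cyc_pred n (Suc k) = k"
  by (simp add: cyc_pred_def)

lemma edge_vec_mod: "0 < n \<Longrightarrow> edge_vec n p (k mod n) = edge_vec n p k"
  by (simp add: edge_vec_def mod_Suc_eq)

lemma sum_cyclic_edges_fun_upd:
  fixes F :: "'a \<Rightarrow> 'a \<Rightarrow> 'b::comm_monoid_add"
  assumes "2 \<le> n" "k < n"
  obtains C where "\<And>x. (\<Sum>j<n. F ((p(k := x)) j) ((p(k := x)) (Suc j mod n)))
    = F (p (cyc_pred n k)) x + F x (p (Suc k mod n)) + C"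
proof
  let ?i = "cyc_pred n k" and ?R = "{..<n} - {cyc_pred n k, k}"
  let ?G = "\<lambda>q j. F (q j) (q (Suc j mod n))"
  fix x
  have i: "?i \<in> {..<n}" "k \<in> {..<n} - {?i}"
    using assms cyc_pred_less[of n k] cyc_pred_neq[of n k] by auto
  have "(\<Sum>j<n. ?G (p(k := x)) j) = ?G (p(k := x)) ?i + sum (?G (p(k := x))) ({..<n} - {?i})"
    by (rule sum.remove[OF _ i(1)]) simp
  also have "sum (?G (p(k := x))) ({..<n} - {?i}) = ?G (p(k := x)) k + sum (?G (p(k := x))) ?R"
    using sum.remove[OF _ i(2), of "?G (p(k := x))"] by (simp add: Diff_insert2[symmetric])
  also have "sum (?G (p(k := x))) ?R = sum (?G p) ?R"
    by (rule sum.cong) (auto dest: cyc_pred_unique)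
  finally show "(\<Sum>j<n. ?G (p(k := x)) j) = F (p ?i) x + F x (p (Suc k mod n)) + sum (?G p) ?R"
    using assms cyc_pred_neq[of n k] Suc_mod_neq_self[of n k] by (simp add: Suc_cyc_pred_mod add.assoc)
qed

lemma curve_length_eq_sum: "curve_length n p = (\<Sum>j<n. cmod (p (Suc j mod n) - p j))"
  unfolding curve_length_def edge_len_def by (rule sum.cong) auto

lemma edge_len_mult_edge_normal:
  "complex_of_real (edge_len n p j) * edge_normal \<sigma> n p j = cis (\<sigma> * pi / 2) * edge_vec n p j"
  by (cases "edge_vec n p j = 0") (simp_all add: edge_normal_def edge_len_def edge_vec_def rot_def)

lemma curve_area_eq_sum:
  "curve_area \<sigma> n p = (\<Sum>j<n. inner (p j) (cis (\<sigma> * pi / 2) * (p (Suc j mod n) - p j)) / 2)"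
proof -
  have "inner (p j) (edge_normal \<sigma> n p j) * edge_len n p j
      = inner (p j) (cis (\<sigma> * pi / 2) * (p (Suc j mod n) - p j))" if "j < n" for j
    using edge_len_mult_edge_normal[of n p j \<sigma>] that
    by (metis edge_vec_def inner_scaleR_right mod_less mult.commute scaleR_conv_of_real)
  then show ?thesis
    unfolding curve_area_def sum_distrib_left by (auto intro: sum.cong)
qed

lemma has_gradient_at_iff_gderiv: "has_gradient_at f g x \<longleftrightarrow> GDERIV f x :> g"
  by (simp add: has_gradient_at_def gderiv_def inner_commute)

lemma has_gradient_at_unique:
  assumes "has_gradient_at f g x" "has_gradient_at f g' x"
  shows "g = g'"
proof -
  have "(\<lambda>h. inner g h) = (\<lambda>h. inner g' h)"
    using has_derivative_unique assms unfolding has_gradient_at_def by blast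
  then have "inner (g - g') (g - g') = 0"
    by (metis inner_diff_left right_minus_eq)
  then show ?thesis by simp
qed

lemma GDERIV_dist_sum:
  fixes a b z :: "'a::real_inner"
  assumes "z \<noteq> a" "z \<noteq> b"
  shows "GDERIV (\<lambda>x. norm (x - a) + norm (b - x) + C) z :> sgn (z - a) - sgn (b - z)"
proof -
  have "GDERIV (\<lambda>x. norm (x - a)) z :> sgn (z - a)"
    using has_derivative_compose[OF has_derivative_diff[OF has_derivative_ident has_derivative_const]
        has_derivative_norm[of "z - a"]] assms by (simp add: gderiv_def)
  moreover have "GDERIV (\<lambda>x. norm (b - x)) z :> - sgn (b - z)"
    using has_derivative_compose[OF has_derivative_diff[OF has_derivative_const has_derivative_ident]
        has_derivative_norm[of "b - z"]] assms by (simp add: gderiv_def)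
  ultimately show ?thesis
    using GDERIV_add[OF GDERIV_add GDERIV_const] by fastforce
qed

text \<open>For \<open>Re c = 0\<close> the quadratic terms cancel, since \<open>inner x (c * x) = Re c * (cmod x)\<^sup>2\<close>.\<close>
lemma GDERIV_area_vertex:
  fixes a b z c :: complex
  assumes "Re c = 0"
  shows "GDERIV (\<lambda>x. inner a (c * (x - a)) / 2 + inner x (c * (b - x)) / 2 + C) z :> c * (b - a) / 2"
proof -
  have "(\<lambda>x. inner a (c * (x - a)) / 2 + inner x (c * (b - x)) / 2 + C)
      = (\<lambda>x. inner (c * (b - a) / 2) x + (C - inner a (c * a) / 2))"
    using assms by (simp add: inner_complex_def field_simps)
  moreover have "GDERIV (\<lambda>x. inner (c * (b - a) / 2) x) z :> c * (b - a) / 2"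
    unfolding gderiv_def inner_commute[of _ "c * (b - a) / 2"]
    by (rule bounded_linear_imp_has_derivative[OF bounded_linear_inner_right])
  ultimately show ?thesis
    using GDERIV_add[OF _ GDERIV_const] by (metis add.right_neutral)
qed

lemma edge_vec_cyc_pred: "k < n \<Longrightarrow> edge_vec n p (cyc_pred n k) = p k - p (cyc_pred n k)"
  using Suc_cyc_pred_mod[of k n] by (simp add: edge_vec_def cyc_pred_def)

lemma edge_vec_less: "k < n \<Longrightarrow> edge_vec n p k = p (Suc k mod n) - p k"
  by (simp add: edge_vec_def)

lemma has_gradient_curve_length:
  assumes "2 \<le> n" "k < n" "edge_vec n p k \<noteq> 0" "edge_vec n p (cyc_pred n k) \<noteq> 0"
  shows "has_gradient_at (\<lambda>x. curve_length n (p(k := x)))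
    (sgn (edge_vec n p (cyc_pred n k)) - sgn (edge_vec n p k)) (p k)"
proof -
  obtain C where C: "\<And>x. (\<Sum>j<n. cmod ((p(k := x)) (Suc j mod n) - (p(k := x)) j))
      = cmod (x - p (cyc_pred n k)) + cmod (p (Suc k mod n) - x) + C"
    using sum_cyclic_edges_fun_upd[OF assms(1,2), of "\<lambda>u v. cmod (v - u)" p] by blast
  show ?thesis
    unfolding has_gradient_at_iff_gderiv curve_length_eq_sum C
    using GDERIV_dist_sum[of "p k" "p (cyc_pred n k)" "p (Suc k mod n)" C] assms
    by (simp add: edge_vec_cyc_pred edge_vec_less)
qed

lemma has_gradient_curve_area:
  assumes "2 \<le> n" "k < n" "cos (\<sigma> * pi / 2) = 0"
  shows "has_gradient_at (\<lambda>x. curve_area \<sigma> n (p(k := x)))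
    (cis (\<sigma> * pi / 2) * (edge_vec n p k + edge_vec n p (cyc_pred n k)) / 2) (p k)"
proof -
  let ?c = "cis (\<sigma> * pi / 2)"
  obtain C where C: "\<And>x. (\<Sum>j<n. inner ((p(k := x)) j) (?c * ((p(k := x)) (Suc j mod n) - (p(k := x)) j)) / 2)
      = inner (p (cyc_pred n k)) (?c * (x - p (cyc_pred n k))) / 2
        + inner x (?c * (p (Suc k mod n) - x)) / 2 + C"
    using sum_cyclic_edges_fun_upd[OF assms(1,2), of "\<lambda>u v. inner u (?c * (v - u)) / 2" p]
    by blast
  show ?thesis
    unfolding has_gradient_at_iff_gderiv curve_area_eq_sum C
    using GDERIV_area_vertex[of ?c "p (cyc_pred n k)" "p (Suc k mod n)" C "p k"] assms
    by (simp add: edge_vec_cyc_pred edge_vec_less)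
qed

lemma edge_len_eq_norm_edge_vec: "edge_len n p j = cmod (edge_vec n p j)"
  by (simp add: edge_len_def edge_vec_def)

lemma closed_discrete_curve_edge_len_pos:
  "closed_discrete_curve n p \<Longrightarrow> j < n \<Longrightarrow> edge_len n p j > 0"
  by (simp add: closed_discrete_curve_def edge_len_def)

lemma closed_discrete_curve_edge_vec_nonzero:
  "closed_discrete_curve n p \<Longrightarrow> j < n \<Longrightarrow> edge_vec n p j \<noteq> 0"
  by (simp add: closed_discrete_curve_def edge_len_eq_norm_edge_vec)

lemma has_gradient_at_iff_eq: "has_gradient_at f g x \<Longrightarrow> has_gradient_at f g' x \<longleftrightarrow> g' = g"
  using has_gradient_at_unique by blast

lemma curve_equilibrium_iff:
  assumes "closed_discrete_curve n p" "\<sigma> = 1 \<or> \<sigma> = -1"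
  shows "(\<forall>k<n. \<exists>gL gV.
             has_gradient_at (\<lambda>x. curve_length n (p(k := x))) gL (p k) \<and>
             has_gradient_at (\<lambda>x. curve_area \<sigma> n (p(k := x))) gV (p k) \<and>
             gL + complex_of_real \<kappa> * gV = 0)
    \<longleftrightarrow> (\<forall>k<n. sgn (edge_vec n p (cyc_pred n k)) - sgn (edge_vec n p k)
             + complex_of_real \<kappa> * (cis (\<sigma> * pi / 2) * (edge_vec n p k + edge_vec n p (cyc_pred n k)) / 2) = 0)"
proof (intro all_cong1 imp_cong refl)
  fix k assume k: "k < n"
  have n: "2 \<le> n"
    using assms(1) by (simp add: closed_discrete_curve_def)
  have "edge_vec n p k \<noteq> 0" "edge_vec n p (cyc_pred n k) \<noteq> 0"
    using closed_discrete_curve_edge_vec_nonzero[OF assms(1)] k n cyc_pred_less[of n k] by auto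
  note length = has_gradient_at_iff_eq[OF has_gradient_curve_length[OF n k this]]
  have "cos (\<sigma> * pi / 2) = 0"
    using assms(2) by auto
  note area = has_gradient_at_iff_eq[OF has_gradient_curve_area[OF n k this]]
  show "(\<exists>gL gV.
             has_gradient_at (\<lambda>x. curve_length n (p(k := x))) gL (p k) \<and>
             has_gradient_at (\<lambda>x. curve_area \<sigma> n (p(k := x))) gV (p k) \<and>
             gL + complex_of_real \<kappa> * gV = 0)
    \<longleftrightarrow> sgn (edge_vec n p (cyc_pred n k)) - sgn (edge_vec n p k)
             + complex_of_real \<kappa> * (cis (\<sigma> * pi / 2) * (edge_vec n p k + edge_vec n p (cyc_pred n k)) / 2) = 0"
    unfolding length area by blast
qed

lemma cis_eq_unit_ex1:
  assumes "cmod z = 1"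
  shows "\<exists>!\<theta>. -pi < \<theta> \<and> \<theta> \<le> pi \<and> cis \<theta> = z"
proof (rule ex1I)
  have "z \<noteq> 0" "sgn z = z"
    using assms by (auto simp: sgn_eq)
  then show "-pi < Arg z \<and> Arg z \<le> pi \<and> cis (Arg z) = z"
    using Arg_bounded cis_Arg by metis
next
  fix \<theta> assume "-pi < \<theta> \<and> \<theta> \<le> pi \<and> cis \<theta> = z"
  then show "\<theta> = Arg z"
    by (metis cis_Arg_unique sgn_cis)
qed

lemma cis_signed_eq_unit_ex1:
  assumes "cmod z = 1" "\<sigma> = 1 \<or> \<sigma> = -1"
  shows "\<exists>!\<theta>. -pi < \<theta> \<and> \<theta> \<le> pi \<and> cis (\<sigma> * \<theta>) = z"
  using assms(2)
proof
  assume "\<sigma> = -1"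
  moreover have "cis (- \<theta>) = z \<longleftrightarrow> cis \<theta> = cnj z" for \<theta>
    by (metis cis_cnj complex_cnj_cnj)
  ultimately show ?thesis
    using cis_eq_unit_ex1[of "cnj z"] assms(1) by simp
qed (use cis_eq_unit_ex1 assms(1) in simp)

lemma edge_normal_eq: "edge_normal \<sigma> n p j = cis (\<sigma> * pi / 2) * sgn (edge_vec n p j)"
  by (simp add: edge_normal_def rot_def sgn_eq edge_len_eq_norm_edge_vec edge_vec_def)

lemma turn_angle_rotates_tangent:
  assumes "closed_discrete_curve n p" "\<sigma> = 1 \<or> \<sigma> = -1" "k < n"
  shows "-pi < turn_angle \<sigma> n p k \<and> turn_angle \<sigma> n p k \<le> pi \<and>
    sgn (edge_vec n p k) = cis (\<sigma> * turn_angle \<sigma> n p k) * sgn (edge_vec n p (cyc_pred n k))"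
proof -
  let ?u = "sgn (edge_vec n p (cyc_pred n k))" and ?v = "sgn (edge_vec n p k)"
  have n: "2 \<le> n" and e: "\<And>j. j < n \<Longrightarrow> edge_vec n p j \<noteq> 0"
    using assms(1) closed_discrete_curve_edge_vec_nonzero by (auto simp: closed_discrete_curve_def)
  then have u: "cmod ?u = 1" "cmod ?v = 1"
    using assms(3) cyc_pred_less[of n k] by (simp_all add: norm_sgn)
  have pred: "edge_vec n p (k + n - 1) = edge_vec n p (cyc_pred n k)"
    using edge_vec_mod[of n p "k + n - 1"] n by (simp add: cyc_pred_def)
  have "edge_normal \<sigma> n p k = rot (\<sigma> * \<theta>) (edge_normal \<sigma> n p (k + n - 1))
      \<longleftrightarrow> cis (\<sigma> * \<theta>) = ?v / ?u" for \<theta>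
    unfolding edge_normal_eq rot_def pred using u by (auto simp: field_simps)
  then have "turn_angle \<sigma> n p k = (THE \<theta>. -pi < \<theta> \<and> \<theta> \<le> pi \<and> cis (\<sigma> * \<theta>) = ?v / ?u)"
    unfolding turn_angle_def by presburger
  moreover have "cmod (?v / ?u) = 1"
    using u by (simp add: norm_divide)
  ultimately show ?thesis
    using theI'[OF cis_signed_eq_unit_ex1[OF _ assms(2)], of "?v / ?u"] u
    by (auto simp: field_simps)
qed

lemma half_angle_balance_iff:
  fixes \<kappa> la lk t :: real
  assumes "\<kappa> \<noteq> 0" "la > 0" "lk > 0"
  shows "(lk - la) * sin t = 0 \<and> 4 * sin t = \<kappa> * (lk + la) * cos t
    \<longleftrightarrow> lk = la \<and> \<kappa> * lk = 2 * tan t"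
proof
  assume *: "(lk - la) * sin t = 0 \<and> 4 * sin t = \<kappa> * (lk + la) * cos t"
  have "sin t \<noteq> 0"
  proof
    assume "sin t = 0"
    then have "cos t = 0"
      using * assms by simp
    with \<open>sin t = 0\<close> show False
      using sin_cos_squared_add[of t] by simp
  qed
  then have "lk = la" "cos t \<noteq> 0"
    using * by auto
  with * show "lk = la \<and> \<kappa> * lk = 2 * tan t"
    by (simp add: tan_def field_simps)
next
  assume *: "lk = la \<and> \<kappa> * lk = 2 * tan t"
  then have "cos t \<noteq> 0"
    using assms by (auto simp: tan_def)
  with * show "(lk - la) * sin t = 0 \<and> 4 * sin t = \<kappa> * (lk + la) * cos t"
    by (auto simp: tan_def field_simps)
qed

lemma vertex_balance_iff:
  fixes u :: complex and \<kappa> la lk \<theta> \<sigma> :: real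
  assumes "\<kappa> \<noteq> 0" "la > 0" "lk > 0" "\<sigma> = 1 \<or> \<sigma> = -1" "u \<noteq> 0"
  shows "u - cis (\<sigma> * \<theta>) * u
      + \<kappa> * (cis (\<sigma> * pi / 2) * (lk * (cis (\<sigma> * \<theta>) * u) + la * u) / 2) = 0
    \<longleftrightarrow> lk = la \<and> \<kappa> * lk = 2 * tan (\<theta> / 2)"
proof -
  define s where "s = \<sigma> * \<theta> / 2"
  define W where "W = cis (- s) - cis s + \<kappa> * (\<i> * \<sigma> * (lk * cis s + la * cis (- s)) / 2)"
  have "cis (\<sigma> * pi / 2) = \<i> * \<sigma>"
    using assms(4) by (auto simp: complex_eq_iff)
  moreover have "cis (\<sigma> * \<theta>) = cis s * cis s" "cis s * cis (- s) = 1"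
    by (simp_all add: s_def cis_mult)
  ultimately have "u - cis (\<sigma> * \<theta>) * u
      + \<kappa> * (cis (\<sigma> * pi / 2) * (lk * (cis (\<sigma> * \<theta>) * u) + la * u) / 2) = u * cis s * W"
    unfolding W_def by (simp add: algebra_simps)
  also have "\<dots> = 0 \<longleftrightarrow> W = 0"
    using assms(5) by simp
  also have "W = 0 \<longleftrightarrow> (lk - la) * sin (\<theta> / 2) = 0 \<and> 4 * sin (\<theta> / 2) = \<kappa> * (lk + la) * cos (\<theta> / 2)"
    using assms(1,4) by (auto simp: W_def s_def complex_eq_iff algebra_simps)
  also have "\<dots> \<longleftrightarrow> lk = la \<and> \<kappa> * lk = 2 * tan (\<theta> / 2)"
    by (rule half_angle_balance_iff[OF assms(1-3)])
  finally show ?thesis .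
qed

lemma vertex_equilibrium_iff:
  assumes "closed_discrete_curve n p" "\<sigma> = 1 \<or> \<sigma> = -1" "\<kappa> \<noteq> 0" "k < n"
  shows "sgn (edge_vec n p (cyc_pred n k)) - sgn (edge_vec n p k)
      + complex_of_real \<kappa> * (cis (\<sigma> * pi / 2) * (edge_vec n p k + edge_vec n p (cyc_pred n k)) / 2) = 0
    \<longleftrightarrow> edge_len n p k = edge_len n p (cyc_pred n k)
      \<and> \<kappa> * edge_len n p k = 2 * tan (turn_angle \<sigma> n p k / 2)"
proof -
  define u where "u = sgn (edge_vec n p (cyc_pred n k))"
  let ?\<theta> = "turn_angle \<sigma> n p k"
  have l: "edge_len n p k > 0" "edge_len n p (cyc_pred n k) > 0"
    using closed_discrete_curve_edge_len_pos[OF assms(1)] assms(4) cyc_pred_less[of n k] by auto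
  have tangent: "sgn (edge_vec n p k) = cis (\<sigma> * ?\<theta>) * u"
    using turn_angle_rotates_tangent[OF assms(1,2,4)] unfolding u_def by blast
  have scale: "edge_vec n p j = edge_len n p j * sgn (edge_vec n p j)" for j
    by (simp add: edge_len_eq_norm_edge_vec sgn_eq)
  have edges: "edge_vec n p k = edge_len n p k * (cis (\<sigma> * ?\<theta>) * u)"
    "edge_vec n p (cyc_pred n k) = edge_len n p (cyc_pred n k) * u"
    by (rule scale[of k, unfolded tangent], rule scale[of "cyc_pred n k", folded u_def])
  have "u \<noteq> 0"
    using l by (simp add: u_def edge_len_eq_norm_edge_vec sgn_zero_iff)
  then show ?thesis
    unfolding u_def[symmetric] tangent unfolding edges by (rule vertex_balance_iff[OF assms(3) l(2,1) assms(2)])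
qed

lemma cyclic_invariant_const:
  assumes "\<forall>k<n. f k = f (cyc_pred n k)" "k < n"
  shows "f k = f 0"
  using assms(2)
proof (induction k)
  case (Suc k)
  then show ?case
    using assms(1) cyc_pred_Suc[of k n] by fastforce
qed simp

lemma two_tan_half_eq_imp:
  assumes "c \<noteq> 0" "c = 2 * tan (\<theta> / 2)" "-pi < \<theta>" "\<theta> \<le> pi"
  shows "\<theta> = 2 * arctan (c / 2)"
proof -
  have "\<theta> / 2 \<noteq> pi / 2"
    using assms(1,2) by auto
  then have "arctan (tan (\<theta> / 2)) = \<theta> / 2"
    using assms(3,4) by (intro arctan_tan) auto
  then show ?thesis
    using assms(2) by simp
qed

lemma local_balance_iff_uniform:
  fixes l \<theta> :: "nat \<Rightarrow> real"
  assumes "0 < n" "\<kappa> \<noteq> 0" "\<forall>k<n. l k > 0 \<and> -pi < \<theta> k \<and> \<theta> k \<le> pi"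
  shows "(\<forall>k<n. l k = l (cyc_pred n k) \<and> \<kappa> * l k = 2 * tan (\<theta> k / 2))
    \<longleftrightarrow> (\<exists>l0 \<theta>0. l0 > 0 \<and> -pi < \<theta>0 \<and> \<theta>0 < pi \<and>
             (\<forall>k<n. l k = l0 \<and> \<theta> k = \<theta>0) \<and> \<kappa> * l0 = 2 * tan (\<theta>0 / 2))"
proof
  assume *: "\<forall>k<n. l k = l (cyc_pred n k) \<and> \<kappa> * l k = 2 * tan (\<theta> k / 2)"
  then have "\<forall>k<n. l k = l (cyc_pred n k)"
    by iprover
  then have l: "l k = l 0" if "k < n" for k
    using that by (rule cyclic_invariant_const)
  let ?\<theta>0 = "2 * arctan (\<kappa> * l 0 / 2)"
  have l0: "l 0 > 0"
    using assms(1,3) by blast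
  then have "\<kappa> * l 0 \<noteq> 0"
    using assms(2) by simp
  then have \<theta>: "\<theta> k = ?\<theta>0" if "k < n" for k
  proof (rule two_tan_half_eq_imp)
    show "-pi < \<theta> k" "\<theta> k \<le> pi"
      using assms(3) that by blast+
    have "\<kappa> * l k = 2 * tan (\<theta> k / 2)"
      using * that by iprover
    then show "\<kappa> * l 0 = 2 * tan (\<theta> k / 2)"
      unfolding l[OF that] .
  qed
  show "\<exists>l0 \<theta>0. l0 > 0 \<and> -pi < \<theta>0 \<and> \<theta>0 < pi \<and>
             (\<forall>k<n. l k = l0 \<and> \<theta> k = \<theta>0) \<and> \<kappa> * l0 = 2 * tan (\<theta>0 / 2)"
  proof (rule exI[of _ "l 0"], rule exI[of _ ?\<theta>0], intro conjI)
    show "\<forall>k<n. l k = l 0 \<and> \<theta> k = ?\<theta>0"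
      using l \<theta> by blast
  qed (use l0 arctan_bounded[of "\<kappa> * l 0 / 2"] in \<open>simp_all add: tan_arctan\<close>)
next
  assume "\<exists>l0 \<theta>0. l0 > 0 \<and> -pi < \<theta>0 \<and> \<theta>0 < pi \<and>
             (\<forall>k<n. l k = l0 \<and> \<theta> k = \<theta>0) \<and> \<kappa> * l0 = 2 * tan (\<theta>0 / 2)"
  then obtain l0 \<theta>0 where "\<forall>k<n. l k = l0 \<and> \<theta> k = \<theta>0" "\<kappa> * l0 = 2 * tan (\<theta>0 / 2)"
    by blast
  then show "\<forall>k<n. l k = l (cyc_pred n k) \<and> \<kappa> * l k = 2 * tan (\<theta> k / 2)"
    using cyc_pred_less[OF assms(1)] by simp
qed

theorem mainTheorem4:
  fixes n :: nat and p :: "nat \<Rightarrow> complex" and \<sigma> \<kappa> :: real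
  assumes "closed_discrete_curve n p"
    and "\<sigma> = 1 \<or> \<sigma> = -1"
    and "\<kappa> \<noteq> 0"
  shows "(\<forall>k<n. \<exists>gL gV.
             has_gradient_at (\<lambda>x. curve_length n (p(k := x))) gL (p k) \<and>
             has_gradient_at (\<lambda>x. curve_area \<sigma> n (p(k := x))) gV (p k) \<and>
             gL + complex_of_real \<kappa> * gV = 0)
     \<longleftrightarrow> (\<exists>l0 \<theta>0. l0 > 0 \<and> -pi < \<theta>0 \<and> \<theta>0 < pi \<and>
             (\<forall>k<n. edge_len n p k = l0 \<and> turn_angle \<sigma> n p k = \<theta>0) \<and>
             \<kappa> * l0 = 2 * tan (\<theta>0 / 2))"
proof -
  have bounds: "\<forall>k<n. edge_len n p k > 0 \<and> -pi < turn_angle \<sigma> n p k \<and> turn_angle \<sigma> n p k \<le> pi"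
    using closed_discrete_curve_edge_len_pos[OF assms(1)] turn_angle_rotates_tangent[OF assms(1,2)]
    by blast
  have n: "0 < n"
    using assms(1) by (simp add: closed_discrete_curve_def)
  note curve_equilibrium_iff[OF assms(1,2)]
  also have "(\<forall>k<n. sgn (edge_vec n p (cyc_pred n k)) - sgn (edge_vec n p k)
      + complex_of_real \<kappa> * (cis (\<sigma> * pi / 2) * (edge_vec n p k + edge_vec n p (cyc_pred n k)) / 2) = 0)
    \<longleftrightarrow> (\<forall>k<n. edge_len n p k = edge_len n p (cyc_pred n k)
      \<and> \<kappa> * edge_len n p k = 2 * tan (turn_angle \<sigma> n p k / 2))"
    by (intro all_cong1 imp_cong refl) (rule vertex_equilibrium_iff[OF assms])
  also have "\<dots> \<longleftrightarrow> (\<exists>l0 \<theta>0. l0 > 0 \<and> -pi < \<theta>0 \<and> \<theta>0 < pi \<and>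
             (\<forall>k<n. edge_len n p k = l0 \<and> turn_angle \<sigma> n p k = \<theta>0) \<and>
             \<kappa> * l0 = 2 * tan (\<theta>0 / 2))"
    by (rule local_balance_iff_uniform[OF n assms(3) bounds])
  finally show ?thesis .
qed

end
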